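(* Let $0<\lambda<1$. Let $X$ be a nonnegative infinitely divisible random variable with drift $\delta\ge0$ and Lévy measure $\nu$ on $(0,\infty)$ satisfying $\int_{(0,\infty)}(1\wedge s)\,\nu(ds)<\infty$, i.e. its Laplace transform is $E[e^{-tX}]=e^{\Psi(-t)}$, $t\ge0$, where $\Psi(t)=\delta t+\int_{(0,\infty)}(e^{st}-1)\,\nu(ds)$. Then $$E[X^{1+\lambda}]=\frac{\lambda}{\Gamma(1-\lambda)}\Big\{\delta\int_0^\infty\frac{1-e^{\Psi(-u)}}{u^{1+\lambda}}\,du+\int_{(0,\infty)}s\Big(\int_0^\infty\frac{1-e^{-us}e^{\Psi(-u)}}{u^{1+\lambda}}\,du\Big)\nu(ds)\Big\}.$$
   Context: $\Gamma$ denotes the Gamma function. *)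

theory Defs
  imports "HOL-Probability.Probability"
begin

text \<open>Laplace exponent: Psi(t) = delta t + integral over (0,infinity) of (e^(s t) - 1) nu(ds).
  The Levy measure nu is a measure on the Borel sets of the reals concentrated on (0,infinity).\<close>
definition laplace_exponent :: "real \<Rightarrow> real measure \<Rightarrow> real \<Rightarrow> real" where
  "laplace_exponent \<delta> \<nu> t = \<delta> * t + (\<integral>s. (exp (s * t) - 1) \<partial>\<nu>)"

end

theory Submission
  imports Defs
begin

text \<open>
  For 0 < lam < 1 and x >= 0 one has x^lam = lam / Gamma(1 - lam) * int_0^oo (1 - e^(-u x)) u^(-1-lam) du,
  so by Tonelli E[X^(1+lam)] is lam / Gamma(1 - lam) times the integral of E[X (1 - e^(-u X))] u^(-1-lam)
  over u > 0. Differentiating the Laplace transform E[e^(-v X)] = e^Psi(-v) from the right gives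
  E[X e^(-v X)] = e^Psi(-v) (delta + int s e^(-v s) nu(ds)); subtracting this at v = u from its value
  at v = 0 yields E[X (1 - e^(-u X))] = delta (1 - e^Psi(-u)) + int s (1 - e^(-u s) e^Psi(-u)) nu(ds),
  and Tonelli in nu gives the formula. All integrals live in [0, oo], so no moment assumption on X is
  needed: the derivatives are limits of difference quotients in [0, oo], which exist even at v = 0.
\<close>

lemma nn_integral_exp_minus_Icc:
  assumes "0 \<le> v"
  shows "(\<integral>\<^sup>+w\<in>{0..v}. ennreal (exp (- w)) \<partial>lborel) = ennreal (1 - exp (- v))"
proof -
  have "((\<lambda>w. exp (- w)) has_integral (- exp (- v)) - (- exp (- 0))) {0..v}"
    using assms by (intro fundamental_theorem_of_calculus)
       (auto intro!: derivative_eq_intros simp flip: has_real_derivative_iff_has_vector_derivative)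
  then show ?thesis
    by (subst nn_integral_has_integral_lebesgue') auto
qed

lemma nn_integral_powr_Ici:
  assumes "0 < w" "0 < a"
  shows "(\<integral>\<^sup>+v\<in>{w..}. ennreal (v powr (- 1 - a)) \<partial>lborel) = ennreal (w powr - a / a)"
proof -
  have "((\<lambda>v. v powr (- 1 - a)) has_integral - (w powr ((- 1 - a) + 1)) / ((- 1 - a) + 1)) {w..}"
    using assms by (intro has_integral_powr_to_inf) auto
  then show ?thesis
    by (subst nn_integral_has_integral_lebesgue') auto
qed

lemma nn_integral_Gamma:
  assumes "0 < a"
  shows "(\<integral>\<^sup>+t\<in>{0<..}. ennreal (exp (- t) * t powr (a - 1)) \<partial>lborel) = ennreal (Gamma a)"
proof -
  have "((\<lambda>t. exp (- t) * t powr (a - 1)) has_integral Gamma a) {0..}"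
    using Gamma_integral_real[OF assms] by (simp add: exp_minus field_simps)
  then have "(\<integral>\<^sup>+t\<in>{0..}. ennreal (exp (- t) * t powr (a - 1)) \<partial>lborel) = ennreal (Gamma a)"
    by (subst nn_integral_has_integral_lebesgue') auto
  moreover have "(\<integral>\<^sup>+t\<in>{0<..}. ennreal (exp (- t) * t powr (a - 1)) \<partial>lborel)
      = (\<integral>\<^sup>+t\<in>{0..}. ennreal (exp (- t) * t powr (a - 1)) \<partial>lborel)"
    by (intro nn_integral_cong_AE) (use AE_lborel_singleton[of 0] in \<open>auto split: split_indicator\<close>)
  ultimately show ?thesis by simp
qed

lemma nn_integral_one_minus_exp_powr:
  assumes "0 < a" "a < 1"
  shows "(\<integral>\<^sup>+v\<in>{0<..}. ennreal ((1 - exp (- v)) / v powr (1 + a)) \<partial>lborel)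
    = ennreal (Gamma (1 - a) / a)"
proof -
  \<comment> \<open>Write \<open>1 - exp (- v)\<close> as the integral of \<open>exp (- w)\<close> over \<open>[0, v]\<close> and swap the integrations.\<close>
  define F where "F w v = ennreal (exp (- w)) * ennreal (v powr (- 1 - a)) * indicator {0<..} w * indicator {w..} v"
    for w v :: real
  have inner_w: "(\<integral>\<^sup>+w. F w v \<partial>lborel) = ennreal ((1 - exp (- v)) / v powr (1 + a)) * indicator {0<..} v"
    for v
  proof (cases "0 < v")
    case True
    have "(\<integral>\<^sup>+w. F w v \<partial>lborel) = (\<integral>\<^sup>+w\<in>{0..v}. ennreal (exp (- w)) \<partial>lborel) * ennreal (v powr (- 1 - a))"
      unfolding F_def
      by (subst nn_integral_multc[symmetric])
         (auto intro!: nn_integral_cong_AE eventually_mono[OF AE_lborel_singleton[of 0]] split: split_indicator)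
    also have "\<dots> = ennreal ((1 - exp (- v)) / v powr (1 + a))"
      using True powr_minus_divide[of v "1 + a"]
      by (simp add: nn_integral_exp_minus_Icc ennreal_mult'' [symmetric] divide_inverse)
    finally show ?thesis using True by simp
  next
    case False
    then have "F w v = 0" for w by (simp add: F_def split: split_indicator)
    with False show ?thesis by simp
  qed
  have inner_v: "(\<integral>\<^sup>+v. F w v \<partial>lborel) = ennreal (exp (- w) * w powr ((1 - a) - 1)) * ennreal (1 / a) * indicator {0<..} w"
    for w
  proof (cases "0 < w")
    case True
    have "(\<integral>\<^sup>+v. F w v \<partial>lborel) = ennreal (exp (- w)) * (\<integral>\<^sup>+v\<in>{w..}. ennreal (v powr (- 1 - a)) \<partial>lborel)"
      unfolding F_def using True by (subst nn_integral_cmult[symmetric]) (auto simp: mult.assoc)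
    also have "\<dots> = ennreal (exp (- w) * w powr ((1 - a) - 1)) * ennreal (1 / a)"
      using True assms by (simp add: nn_integral_powr_Ici ennreal_mult [symmetric])
    finally show ?thesis using True by simp
  qed (simp add: F_def)
  have "(\<integral>\<^sup>+v\<in>{0<..}. ennreal ((1 - exp (- v)) / v powr (1 + a)) \<partial>lborel)
      = (\<integral>\<^sup>+v. \<integral>\<^sup>+w. F w v \<partial>lborel \<partial>lborel)"
    by (simp add: inner_w)
  also have "\<dots> = (\<integral>\<^sup>+w. \<integral>\<^sup>+v. F w v \<partial>lborel \<partial>lborel)"
    unfolding F_def indicator_def by (rule lborel_pair.Fubini') simp
  also have "\<dots> = (\<integral>\<^sup>+w\<in>{0<..}. ennreal (exp (- w) * w powr ((1 - a) - 1)) \<partial>lborel) * ennreal (1 / a)"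
    by (subst nn_integral_multc[symmetric]) (auto simp: inner_v mult_ac)
  also have "\<dots> = ennreal (Gamma (1 - a) / a)"
    using assms nn_integral_Gamma[of "1 - a"] ennreal_mult''[of "1 / a" "Gamma (1 - a)"] by simp
  finally show ?thesis .
qed

lemma powr_eq_nn_integral_one_minus_exp:
  assumes "0 < a" "a < 1" "0 \<le> x"
  shows "ennreal (x powr a)
    = ennreal (a / Gamma (1 - a)) * (\<integral>\<^sup>+u\<in>{0<..}. ennreal ((1 - exp (- u * x)) / u powr (1 + a)) \<partial>lborel)"
proof (cases "x = 0")
  case False
  with assms have x: "0 < x" by simp
  define I where "I = (\<integral>\<^sup>+u\<in>{0<..}. ennreal ((1 - exp (- u * x)) / u powr (1 + a)) \<partial>lborel)"
  have scale: "ennreal ((1 - exp (- (x * u))) / (x * u) powr (1 + a)) * indicator {0<..} (x * u)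
      = ennreal (x powr (- 1 - a)) * (ennreal ((1 - exp (- u * x)) / u powr (1 + a)) * indicator {0<..} u)" for u
  proof (cases "0 < u")
    case True
    have "(1 - exp (- (x * u))) / (x * u) powr (1 + a) = x powr (- 1 - a) * ((1 - exp (- u * x)) / u powr (1 + a))"
      using x True powr_minus_divide[of x "1 + a"] by (simp add: powr_mult mult.commute)
    then show ?thesis
      using x True by (simp add: ennreal_mult [symmetric] zero_less_mult_iff)
  qed (use x in \<open>simp add: zero_less_mult_iff\<close>)
  have "ennreal (Gamma (1 - a) / a) = (\<integral>\<^sup>+v\<in>{0<..}. ennreal ((1 - exp (- v)) / v powr (1 + a)) \<partial>lborel)"
    using nn_integral_one_minus_exp_powr[OF assms(1,2)] by simp
  also have "\<dots> = ennreal x * (\<integral>\<^sup>+u. ennreal ((1 - exp (- (x * u))) / (x * u) powr (1 + a)) * indicator {0<..} (x * u) \<partial>lborel)"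
    using x by (subst nn_integral_real_affine[where c = x and t = 0]) auto
  also have "\<dots> = ennreal x * ennreal (x powr (- 1 - a)) * I"
    by (simp add: scale nn_integral_cmult I_def mult.assoc)
  also have "ennreal x * ennreal (x powr (- 1 - a)) = ennreal (x powr - a)"
    using x powr_add[of x 1 "- 1 - a"] by (simp add: ennreal_mult [symmetric])
  finally have Gamma_eq: "ennreal (Gamma (1 - a) / a) = ennreal (x powr - a) * I" .
  have "0 < Gamma (1 - a)"
    using assms by (intro Gamma_real_pos) simp
  then have inverse: "ennreal (a / Gamma (1 - a)) * ennreal (Gamma (1 - a) / a) = 1"
    using assms by (simp add: ennreal_mult [symmetric] less_imp_neq [symmetric])
  have cancel: "ennreal (x powr a) * ennreal (x powr - a) = 1"
    using x by (simp add: ennreal_mult [symmetric] powr_add [symmetric])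
  have "ennreal (x powr a) = ennreal (x powr a) * (ennreal (a / Gamma (1 - a)) * ennreal (Gamma (1 - a) / a))"
    by (simp add: inverse)
  also have "\<dots> = ennreal (a / Gamma (1 - a)) * ((ennreal (x powr a) * ennreal (x powr - a)) * I)"
    by (simp add: Gamma_eq mult_ac)
  also have "\<dots> = ennreal (a / Gamma (1 - a)) * I"
    by (simp add: cancel)
  finally show ?thesis by (simp add: I_def)
qed simp

lemma (in sigma_finite_measure) nn_integral_powr_one_plus_eq:
  fixes X :: "'a \<Rightarrow> real"
  assumes [measurable]: "X \<in> borel_measurable M" and nonneg: "\<forall>x\<in>space M. 0 \<le> X x"
    and "0 < a" "a < 1"
  shows "(\<integral>\<^sup>+x. ennreal (X x powr (1 + a)) \<partial>M) = ennreal (a / Gamma (1 - a)) *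
    (\<integral>\<^sup>+u\<in>{0<..}. (\<integral>\<^sup>+x. ennreal (X x * (1 - exp (- u * X x))) \<partial>M) * ennreal (1 / u powr (1 + a)) \<partial>lborel)"
proof -
  interpret pair_sigma_finite lborel M ..
  define F where "F u x = ennreal (X x * (1 - exp (- u * X x))) * ennreal (1 / u powr (1 + a)) * indicator {0<..} u"
    for u x
  have pointwise: "ennreal (X x powr (1 + a)) = ennreal (a / Gamma (1 - a)) * (\<integral>\<^sup>+u. F u x \<partial>lborel)"
    if "x \<in> space M" for x
  proof -
    have x: "0 \<le> X x" using nonneg that by simp
    have "ennreal (X x) * ennreal ((1 - exp (- u * X x)) / u powr (1 + a)) * indicator {0<..} u = F u x" for u
      using x by (simp add: F_def ennreal_mult' [symmetric] ennreal_mult'' [symmetric])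
    then have F_eq: "ennreal (X x) * (\<integral>\<^sup>+u\<in>{0<..}. ennreal ((1 - exp (- u * X x)) / u powr (1 + a)) \<partial>lborel)
        = (\<integral>\<^sup>+u. F u x \<partial>lborel)"
      by (simp add: nn_integral_cmult [symmetric] mult.assoc)
    have "ennreal (X x powr (1 + a)) = ennreal (X x) * ennreal (X x powr a)"
      using x by (simp add: powr_add ennreal_mult [symmetric])
    also have "\<dots> = ennreal (X x) * (ennreal (a / Gamma (1 - a)) *
        (\<integral>\<^sup>+u\<in>{0<..}. ennreal ((1 - exp (- u * X x)) / u powr (1 + a)) \<partial>lborel))"
      by (simp only: powr_eq_nn_integral_one_minus_exp[OF \<open>0 < a\<close> \<open>a < 1\<close> x])
    also have "\<dots> = ennreal (a / Gamma (1 - a)) * (\<integral>\<^sup>+u. F u x \<partial>lborel)"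
      by (simp only: mult.left_commute[of "ennreal (X x)"] F_eq)
    finally show ?thesis .
  qed
  have "(\<integral>\<^sup>+x. ennreal (X x powr (1 + a)) \<partial>M) = ennreal (a / Gamma (1 - a)) * (\<integral>\<^sup>+x. \<integral>\<^sup>+u. F u x \<partial>lborel \<partial>M)"
    by (simp add: pointwise nn_integral_cmult F_def cong: nn_integral_cong)
  also have "(\<integral>\<^sup>+x. \<integral>\<^sup>+u. F u x \<partial>lborel \<partial>M) = (\<integral>\<^sup>+u. \<integral>\<^sup>+x. F u x \<partial>M \<partial>lborel)"
    unfolding F_def by (rule Fubini') measurable
  also have "\<dots> = (\<integral>\<^sup>+u\<in>{0<..}. (\<integral>\<^sup>+x. ennreal (X x * (1 - exp (- u * X x))) \<partial>M) * ennreal (1 / u powr (1 + a)) \<partial>lborel)"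
    unfolding F_def by (simp add: nn_integral_multc)
  finally show ?thesis .
qed

lemma (in sigma_finite_measure) nn_integral_set_lborel_mult_swap:
  fixes f :: "'a \<Rightarrow> ennreal" and g :: "real \<Rightarrow> 'a \<Rightarrow> ennreal"
  assumes [measurable]: "A \<in> sets borel" "f \<in> borel_measurable M" "case_prod g \<in> borel_measurable (lborel \<Otimes>\<^sub>M M)"
  shows "(\<integral>\<^sup>+u\<in>A. (\<integral>\<^sup>+x. f x * g u x \<partial>M) \<partial>lborel) = (\<integral>\<^sup>+x. f x * (\<integral>\<^sup>+u\<in>A. g u x \<partial>lborel) \<partial>M)"
proof -
  interpret pair_sigma_finite lborel M ..
  have "(\<integral>\<^sup>+u\<in>A. (\<integral>\<^sup>+x. f x * g u x \<partial>M) \<partial>lborel) = (\<integral>\<^sup>+u. \<integral>\<^sup>+x. f x * g u x * indicator A u \<partial>M \<partial>lborel)"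
    by (simp add: nn_integral_multc)
  also have "\<dots> = (\<integral>\<^sup>+x. \<integral>\<^sup>+u. f x * g u x * indicator A u \<partial>lborel \<partial>M)"
    by (rule Fubini' [symmetric]) measurable
  also have "\<dots> = (\<integral>\<^sup>+x. f x * (\<integral>\<^sup>+u\<in>A. g u x \<partial>lborel) \<partial>M)"
  proof (rule nn_integral_cong)
    fix x assume "x \<in> space M"
    have [measurable]: "(\<lambda>u. g u x) \<in> borel_measurable lborel"
      using measurable_Pair1[OF assms(3) \<open>x \<in> space M\<close>] by simp
    show "(\<integral>\<^sup>+u. f x * g u x * indicator A u \<partial>lborel) = f x * (\<integral>\<^sup>+u\<in>A. g u x \<partial>lborel)"
      by (subst nn_integral_cmult [symmetric]) (simp_all add: mult.assoc)
  qed
  finally show ?thesis .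
qed

lemma nn_integral_tendsto_of_le_limit:
  fixes f :: "nat \<Rightarrow> 'a \<Rightarrow> ennreal"
  assumes "\<And>n. f n \<in> borel_measurable M"
    and lim: "\<And>x. (\<lambda>n. f n x) \<longlonglongrightarrow> g x" and le: "\<And>n x. f n x \<le> g x"
  shows "(\<lambda>n. \<integral>\<^sup>+x. f n x \<partial>M) \<longlonglongrightarrow> (\<integral>\<^sup>+x. g x \<partial>M)"
proof -
  have "(\<integral>\<^sup>+x. g x \<partial>M) = (\<integral>\<^sup>+x. liminf (\<lambda>n. f n x) \<partial>M)"
    by (intro nn_integral_cong lim_imp_Liminf [symmetric] lim) simp
  also have "\<dots> \<le> liminf (\<lambda>n. \<integral>\<^sup>+x. f n x \<partial>M)"
    by (rule nn_integral_liminf) fact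
  finally have "(\<integral>\<^sup>+x. g x \<partial>M) \<le> liminf (\<lambda>n. \<integral>\<^sup>+x. f n x \<partial>M)" .
  moreover have "limsup (\<lambda>n. \<integral>\<^sup>+x. f n x \<partial>M) \<le> (\<integral>\<^sup>+x. g x \<partial>M)"
    by (intro Limsup_bounded always_eventually allI nn_integral_mono le)
  moreover have "liminf (\<lambda>n. \<integral>\<^sup>+x. f n x \<partial>M) \<le> limsup (\<lambda>n. \<integral>\<^sup>+x. f n x \<partial>M)"
    by (rule Liminf_le_Limsup) simp
  ultimately show ?thesis
    by (intro Liminf_eq_Limsup) auto
qed

lemma nn_integral_exp_difference_quotient_tendsto:
  fixes f :: "'a \<Rightarrow> real" and h :: "nat \<Rightarrow> real"
  assumes [measurable]: "f \<in> borel_measurable M" and h: "\<And>n. 0 < h n" "h \<longlonglongrightarrow> 0"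
  shows "(\<lambda>n. \<integral>\<^sup>+x. ennreal (exp (- v * f x) * (1 - exp (- h n * f x)) / h n) \<partial>M)
    \<longlonglongrightarrow> (\<integral>\<^sup>+x. ennreal (f x * exp (- v * f x)) \<partial>M)"
proof (rule nn_integral_tendsto_of_le_limit)
  fix x
  have "((\<lambda>t. 1 - exp (- t * f x)) has_field_derivative f x) (at 0)"
    by (auto intro!: derivative_eq_intros)
  then have "((\<lambda>t. (1 - exp (- t * f x)) / t) \<longlongrightarrow> f x) (at 0)"
    by (simp add: has_field_derivative_iff)
  moreover have "h n \<noteq> 0" for n
    using h(1)[of n] by simp
  then have "filterlim h (at 0) sequentially"
    using h(2) by (intro filterlim_atI) auto
  ultimately have "(\<lambda>n. (1 - exp (- h n * f x)) / h n) \<longlonglongrightarrow> f x"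
    by (rule filterlim_compose)
  then have "(\<lambda>n. exp (- v * f x) * ((1 - exp (- h n * f x)) / h n)) \<longlonglongrightarrow> exp (- v * f x) * f x"
    by (rule tendsto_mult_left)
  then show "(\<lambda>n. ennreal (exp (- v * f x) * (1 - exp (- h n * f x)) / h n)) \<longlonglongrightarrow> ennreal (f x * exp (- v * f x))"
    by (intro tendsto_ennrealI) (simp add: mult.commute)
next
  fix n x
  have "1 - exp (- h n * f x) \<le> h n * f x"
    using exp_ge_add_one_self[of "- h n * f x"] by simp
  then have "exp (- v * f x) * (1 - exp (- h n * f x)) / h n \<le> f x * exp (- v * f x)"
    using h(1)[of n] by (simp add: divide_le_eq mult.commute mult.left_commute mult_left_mono)
  then show "ennreal (exp (- v * f x) * (1 - exp (- h n * f x)) / h n) \<le> ennreal (f x * exp (- v * f x))"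
    by (rule ennreal_leI)
qed simp

lemma tendsto_ennreal_one_minus_exp_quotient:
  fixes D h :: "nat \<Rightarrow> real"
  assumes D: "\<And>n. 0 \<le> D n" "D \<longlonglongrightarrow> 0" and h: "\<And>n. 0 < h n"
    and lim: "(\<lambda>n. ennreal (D n / h n)) \<longlonglongrightarrow> K"
  shows "(\<lambda>n. ennreal ((1 - exp (- D n)) / h n)) \<longlonglongrightarrow> K"
proof (rule tendsto_sandwich)
  have "(\<lambda>n. ennreal (D n / h n) * ennreal (1 / (1 + D n))) \<longlonglongrightarrow> K * ennreal (1 / (1 + 0))"
    by (intro tendsto_mult_ennreal lim tendsto_ennrealI tendsto_intros D) auto
  then show "(\<lambda>n. ennreal (D n / h n) * ennreal (1 / (1 + D n))) \<longlonglongrightarrow> K" by simp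
  show "\<forall>\<^sub>F n in sequentially. ennreal (D n / h n) * ennreal (1 / (1 + D n)) \<le> ennreal ((1 - exp (- D n)) / h n)"
  proof (intro always_eventually allI)
    fix n
    have "exp (- D n) \<le> 1 / (1 + D n)"
      using exp_ge_add_one_self[of "D n"] D(1)[of n] by (simp add: exp_minus field_simps)
    then have "D n / (1 + D n) \<le> 1 - exp (- D n)"
      using D(1)[of n] by (simp add: field_simps)
    then have "D n / (1 + D n) / h n \<le> (1 - exp (- D n)) / h n"
      using h[of n] by (intro divide_right_mono) auto
    then have "D n / h n * (1 / (1 + D n)) \<le> (1 - exp (- D n)) / h n"
      by (simp add: ac_simps)
    then show "ennreal (D n / h n) * ennreal (1 / (1 + D n)) \<le> ennreal ((1 - exp (- D n)) / h n)"
      using D(1)[of n] h[of n] by (simp add: ennreal_mult [symmetric] ennreal_leI)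
  qed
  show "\<forall>\<^sub>F n in sequentially. ennreal ((1 - exp (- D n)) / h n) \<le> ennreal (D n / h n)"
  proof (intro always_eventually allI ennreal_leI divide_right_mono)
    show "1 - exp (- D n) \<le> D n" for n
      using exp_ge_add_one_self[of "- D n"] by simp
  qed (use h in \<open>simp add: less_imp_le\<close>)
qed (rule lim)

lemma (in finite_measure) laplace_difference_quotient_tendsto:
  fixes X :: "'a \<Rightarrow> real" and h :: "nat \<Rightarrow> real"
  assumes [measurable]: "X \<in> borel_measurable M" and nonneg: "\<forall>x\<in>space M. 0 \<le> X x"
    and v: "0 \<le> v" and h: "\<And>n. 0 < h n" "h \<longlonglongrightarrow> 0"
  shows "(\<lambda>n. ennreal (((\<integral>x. exp (- v * X x) \<partial>M) - (\<integral>x. exp (- (v + h n) * X x) \<partial>M)) / h n))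
    \<longlonglongrightarrow> (\<integral>\<^sup>+x. ennreal (X x * exp (- v * X x)) \<partial>M)"
proof -
  have integrable_exp: "integrable M (\<lambda>x. exp (- t * X x))" if "0 \<le> t" for t
    using that nonneg by (intro integrable_const_bound[where B = 1]) (auto intro!: AE_I2)
  have integrable_v: "integrable M (\<lambda>x. exp (- v * X x))"
    using v by (rule integrable_exp)
  have integrable_vh: "integrable M (\<lambda>x. exp (- (v + h n) * X x))" for n
    using v h(1)[of n] by (intro integrable_exp) simp
  have "ennreal (((\<integral>x. exp (- v * X x) \<partial>M) - (\<integral>x. exp (- (v + h n) * X x) \<partial>M)) / h n)
      = ennreal (\<integral>x. (exp (- v * X x) - exp (- (v + h n) * X x)) / h n \<partial>M)" for n
    by (simp only: integral_divide_zero Bochner_Integration.integral_diff[OF integrable_v integrable_vh])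
  also have "\<dots> n = (\<integral>\<^sup>+x. ennreal ((exp (- v * X x) - exp (- (v + h n) * X x)) / h n) \<partial>M)" for n
  proof (intro nn_integral_eq_integral [symmetric] AE_I2 impI)
    show "integrable M (\<lambda>x. (exp (- v * X x) - exp (- (v + h n) * X x)) / h n)"
      using integrable_v integrable_vh by simp
    fix x assume "x \<in> space M"
    then have "0 \<le> h n * X x"
      using nonneg h(1)[of n] by simp
    then have "exp (- (v + h n) * X x) \<le> exp (- v * X x)"
      by (simp add: algebra_simps)
    then show "0 \<le> (exp (- v * X x) - exp (- (v + h n) * X x)) / h n"
      using h(1)[of n] by simp
  qed
  also have "\<dots> n = (\<integral>\<^sup>+x. ennreal (exp (- v * X x) * (1 - exp (- h n * X x)) / h n) \<partial>M)" for n
    by (simp add: algebra_simps exp_add [symmetric])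
  finally show ?thesis
    using nn_integral_exp_difference_quotient_tendsto[of X M h v] h by simp
qed

lemma nn_integral_split_exp:
  fixes f :: "'a \<Rightarrow> real"
  assumes [measurable]: "f \<in> borel_measurable M" and nonneg: "AE x in M. 0 \<le> f x"
    and "0 \<le> u" "0 \<le> c" "c \<le> 1"
  shows "(\<integral>\<^sup>+x. ennreal (f x) \<partial>M)
    = (\<integral>\<^sup>+x. ennreal (f x * (1 - exp (- u * f x) * c)) \<partial>M) + ennreal c * (\<integral>\<^sup>+x. ennreal (f x * exp (- u * f x)) \<partial>M)"
proof -
  have "AE x in M. ennreal (f x) = ennreal (f x * (1 - exp (- u * f x) * c)) + ennreal c * ennreal (f x * exp (- u * f x))"
    using nonneg
  proof eventually_elim
    case (elim x)
    have "exp (- u * f x) * c \<le> 1"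
      using elim assms(3-5) mult_mono[of "exp (- u * f x)" 1 c 1] by (simp add: mult_nonneg_nonneg)
    then have "0 \<le> f x * (1 - exp (- u * f x) * c)" "0 \<le> c * (f x * exp (- u * f x))"
      using elim assms(4) by simp_all
    then have "ennreal (f x * (1 - exp (- u * f x) * c) + c * (f x * exp (- u * f x)))
        = ennreal (f x * (1 - exp (- u * f x) * c)) + ennreal c * ennreal (f x * exp (- u * f x))"
      using assms(4) by (simp add: ennreal_mult')
    then show ?case
      by (simp add: algebra_simps)
  qed
  then show ?thesis
    by (simp add: nn_integral_cong_AE nn_integral_add nn_integral_cmult)
qed

lemma sigma_finite_measure_if_nn_integral_finite:
  fixes f :: "'a \<Rightarrow> real"
  assumes [measurable]: "f \<in> borel_measurable M" and int: "(\<integral>\<^sup>+x. ennreal (f x) \<partial>M) < \<infinity>"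
    and nonpos: "emeasure M {x \<in> space M. f x \<le> 0} < \<infinity>"
  shows "sigma_finite_measure M"
proof
  define A where "A n = {x \<in> space M. 1 \<le> real (Suc n) * f x}" for n
  have bound: "emeasure M (A n) \<le> ennreal (real (Suc n)) * (\<integral>\<^sup>+x. ennreal (f x) \<partial>M)" for n
  proof -
    have "indicator (A n) x \<le> ennreal (real (Suc n) * f x)" for x
      using ennreal_leI[of 1 "real (Suc n) * f x"] by (auto simp: A_def split: split_indicator)
    moreover have "A n \<in> sets M"
      by (simp add: A_def)
    ultimately have "emeasure M (A n) \<le> (\<integral>\<^sup>+x. ennreal (real (Suc n) * f x) \<partial>M)"
      by (simp add: nn_integral_indicator [symmetric] nn_integral_mono del: nn_integral_indicator)
    also have "\<dots> = ennreal (real (Suc n)) * (\<integral>\<^sup>+x. ennreal (f x) \<partial>M)"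
      unfolding ennreal_mult'[OF of_nat_0_le_iff] by (rule nn_integral_cmult) simp
    finally show ?thesis .
  qed
  have finite: "emeasure M (A n) < \<infinity>" for n
    using int by (intro le_less_trans[OF bound]) (simp add: ennreal_mult_less_top)
  have cover: "space M \<subseteq> {x \<in> space M. f x \<le> 0} \<union> (\<Union>n. A n)"
  proof
    fix x assume x: "x \<in> space M"
    show "x \<in> {x \<in> space M. f x \<le> 0} \<union> (\<Union>n. A n)"
    proof (cases "f x \<le> 0")
      case False
      then obtain n where "inverse (real (Suc n)) < f x"
        using reals_Archimedean[of "f x"] by auto
      then have "1 \<le> real (Suc n) * f x"
        by (simp add: inverse_eq_divide divide_less_eq mult.commute less_imp_le)
      then have "x \<in> A n"
        using x by (simp add: A_def)
      then show ?thesis by blast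
    qed (use x in simp)
  qed
  show "\<exists>A. countable A \<and> A \<subseteq> sets M \<and> \<Union> A = space M \<and> (\<forall>a\<in>A. emeasure M a \<noteq> \<infinity>)"
  proof (intro exI[of _ "insert {x \<in> space M. f x \<le> 0} (range A)"] conjI)
    show "insert {x \<in> space M. f x \<le> 0} (range A) \<subseteq> sets M"
      by (auto simp: A_def)
    have "\<Union> (insert {x \<in> space M. f x \<le> 0} (range A)) \<subseteq> space M"
      by (auto simp: A_def)
    with cover show "\<Union> (insert {x \<in> space M. f x \<le> 0} (range A)) = space M"
      by auto
    show "\<forall>a\<in>insert {x \<in> space M. f x \<le> 0} (range A). emeasure M a \<noteq> \<infinity>"
      using finite nonpos by (auto simp: less_top)
  qed simp
qed

locale nonneg_infinitely_divisible = prob_space M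
  for M :: "'a measure" +
  fixes X :: "'a \<Rightarrow> real" and \<delta> :: real and \<nu> :: "real measure"
  assumes X_measurable [measurable]: "X \<in> borel_measurable M"
    and X_nonneg: "\<forall>x\<in>space M. 0 \<le> X x"
    and drift_nonneg: "0 \<le> \<delta>"
    and sets_levy_measure [measurable_cong]: "sets \<nu> = sets borel"
    and levy_measure_nonpos: "emeasure \<nu> {..0} = 0"
    and levy_measure_min_finite: "(\<integral>\<^sup>+ s. ennreal (min 1 s) \<partial>\<nu>) < \<infinity>"
    and laplace_transform: "\<forall>t\<ge>0. (\<integral>x. exp (- t * X x) \<partial>M) = exp (laplace_exponent \<delta> \<nu> (- t))"
begin

abbreviation \<Psi> :: "real \<Rightarrow> real" where
  "\<Psi> \<equiv> laplace_exponent \<delta> \<nu>"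

lemma space_levy_measure [simp]: "space \<nu> = UNIV"
  using sets_eq_imp_space_eq[OF sets_levy_measure] by simp

lemma AE_levy_measure_pos: "AE s in \<nu>. 0 < s"
  using levy_measure_nonpos sets_levy_measure by (intro AE_I[of _ _ "{..0}"]) auto

lemma integrable_levy_measure_min: "integrable \<nu> (\<lambda>s. min 1 s)"
  using AE_levy_measure_pos levy_measure_min_finite
  by (intro integrableI_nonneg) (auto elim!: eventually_mono)

lemma sigma_finite_levy_measure: "sigma_finite_measure \<nu>"
proof (rule sigma_finite_measure_if_nn_integral_finite)
  have "{s \<in> space \<nu>. min 1 s \<le> (0::real)} = {..0}"
    by auto
  then show "emeasure \<nu> {s \<in> space \<nu>. min 1 s \<le> (0::real)} < \<infinity>"
    using levy_measure_nonpos by simp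
qed (use levy_measure_min_finite in simp_all)

end

sublocale nonneg_infinitely_divisible \<subseteq> levy: sigma_finite_measure \<nu>
  by (rule sigma_finite_levy_measure)

context nonneg_infinitely_divisible
begin

lemma borel_measurable_laplace_exponent [measurable]: "\<Psi> \<in> borel_measurable borel"
  unfolding laplace_exponent_def by measurable

lemma integrable_exp_minus_one:
  assumes "t \<le> 0"
  shows "integrable \<nu> (\<lambda>s. exp (s * t) - 1)"
proof (rule Bochner_Integration.integrable_bound)
  show "integrable \<nu> (\<lambda>s. max 1 (- t) * min 1 s)"
    using integrable_levy_measure_min by simp
  show "AE s in \<nu>. norm (exp (s * t) - 1) \<le> norm (max 1 (- t) * min 1 s)"
    using AE_levy_measure_pos
  proof eventually_elim
    case (elim s)
    have "1 - exp (s * t) \<le> - (s * t)"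
      using exp_ge_add_one_self[of "s * t"] by linarith
    moreover have "- (s * t) \<le> max 1 (- t) * s"
      using elim mult_right_mono[of "- t" "max 1 (- t)" s] by (simp add: mult.commute)
    moreover have "exp (s * t) \<le> 1"
      using elim assms by (simp add: mult_nonneg_nonpos)
    ultimately have "\<bar>exp (s * t) - 1\<bar> \<le> max 1 (- t) * min 1 s"
      using elim by (auto simp: min_def le_max_iff_disj)
    then show ?case
      using elim by simp
  qed
qed measurable

lemma laplace_exponent_diff:
  assumes "0 \<le> v" "0 \<le> h"
  shows "\<Psi> (- v) - \<Psi> (- (v + h)) = \<delta> * h + (\<integral>s. exp (- v * s) * (1 - exp (- h * s)) \<partial>\<nu>)"
proof -
  have "(\<integral>s. exp (s * - v) - 1 \<partial>\<nu>) - (\<integral>s. exp (s * - (v + h)) - 1 \<partial>\<nu>)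
      = (\<integral>s. (exp (s * - v) - 1) - (exp (s * - (v + h)) - 1) \<partial>\<nu>)"
    using assms by (intro Bochner_Integration.integral_diff [symmetric] integrable_exp_minus_one) auto
  also have "\<dots> = (\<integral>s. exp (- v * s) * (1 - exp (- h * s)) \<partial>\<nu>)"
    by (simp add: algebra_simps exp_add [symmetric])
  finally show ?thesis
    by (simp add: laplace_exponent_def algebra_simps)
qed

lemma exp_laplace_exponent_le_one:
  assumes "0 \<le> t"
  shows "exp (\<Psi> (- t)) \<le> 1"
proof -
  have "(\<integral>x. exp (- t * X x) \<partial>M) \<le> 1"
    using assms X_nonneg
    by (intro integral_le_const integrable_const_bound[where B = 1] AE_I2) auto
  then show ?thesis
    using laplace_transform assms by simp
qed

lemma laplace_exponent_tendsto:
  assumes v: "0 \<le> v" and h: "\<And>n. 0 < h n" "h \<longlonglongrightarrow> 0"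
  shows "(\<lambda>n. \<Psi> (- (v + h n))) \<longlonglongrightarrow> \<Psi> (- v)"
proof -
  have transform: "(\<integral>x. exp (- t * X x) \<partial>M) = exp (\<Psi> (- t))" if "0 \<le> t" for t
    using laplace_transform that by blast
  have "(\<lambda>n. \<integral>x. exp (- (v + h n) * X x) \<partial>M) = (\<lambda>n. exp (\<Psi> (- (v + h n))))"
    using v h(1) by (intro ext transform) (simp add: add_nonneg_pos less_imp_le)
  moreover have "(\<lambda>n. \<integral>x. exp (- (v + h n) * X x) \<partial>M) \<longlonglongrightarrow> (\<integral>x. exp (- v * X x) \<partial>M)"
  proof (rule integral_dominated_convergence[where w = "\<lambda>_. 1"])
    have "(\<lambda>n. v + h n) \<longlonglongrightarrow> v"
      using tendsto_add[OF tendsto_const h(2), of v] by simp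
    then show "AE x in M. (\<lambda>n. exp (- (v + h n) * X x)) \<longlonglongrightarrow> exp (- v * X x)"
      by (intro AE_I2 tendsto_exp tendsto_mult_right tendsto_minus)
    show "AE x in M. norm (exp (- (v + h n) * X x)) \<le> 1" for n
      using X_nonneg v h(1)[of n] by (intro AE_I2) (auto intro!: mult_nonpos_nonneg)
  qed auto
  ultimately have "(\<lambda>n. exp (\<Psi> (- (v + h n)))) \<longlonglongrightarrow> exp (\<Psi> (- v))"
    by (simp only: transform[OF v])
  then have "(\<lambda>n. ln (exp (\<Psi> (- (v + h n))))) \<longlonglongrightarrow> ln (exp (\<Psi> (- v)))"
    by (rule tendsto_ln) simp
  then show ?thesis by simp
qed

lemma laplace_exponent_difference_quotient_tendsto:
  assumes v: "0 \<le> v" and h: "\<And>n. 0 < h n" "h \<longlonglongrightarrow> 0"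
  shows "(\<lambda>n. ennreal ((\<Psi> (- v) - \<Psi> (- (v + h n))) / h n))
    \<longlonglongrightarrow> ennreal \<delta> + (\<integral>\<^sup>+s. ennreal (s * exp (- v * s)) \<partial>\<nu>)"
proof -
  have "ennreal ((\<Psi> (- v) - \<Psi> (- (v + h n))) / h n)
      = ennreal \<delta> + (\<integral>\<^sup>+s. ennreal (exp (- v * s) * (1 - exp (- h n * s)) / h n) \<partial>\<nu>)" for n
  proof -
    have integrable: "integrable \<nu> (\<lambda>s. exp (- v * s) * (1 - exp (- h n * s)))"
    proof -
      have "integrable \<nu> (\<lambda>s. (exp (s * - v) - 1) - (exp (s * - (v + h n)) - 1))"
        using v h(1)[of n] by (intro Bochner_Integration.integrable_diff integrable_exp_minus_one) auto
      then show ?thesis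
        by (simp add: algebra_simps exp_add [symmetric])
    qed
    have nonneg: "AE s in \<nu>. 0 \<le> exp (- v * s) * (1 - exp (- h n * s)) / h n"
      using AE_levy_measure_pos by eventually_elim (use h(1)[of n] in simp)
    have "(\<Psi> (- v) - \<Psi> (- (v + h n))) / h n = \<delta> + (\<integral>s. exp (- v * s) * (1 - exp (- h n * s)) / h n \<partial>\<nu>)"
      using laplace_exponent_diff[of v "h n"] v h(1)[of n] by (simp add: add_divide_distrib)
    also have "ennreal \<dots> = ennreal \<delta> + ennreal (\<integral>s. exp (- v * s) * (1 - exp (- h n * s)) / h n \<partial>\<nu>)"
      using drift_nonneg integral_nonneg_AE[OF nonneg] by (rule ennreal_plus)
    also have "ennreal (\<integral>s. exp (- v * s) * (1 - exp (- h n * s)) / h n \<partial>\<nu>)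
        = (\<integral>\<^sup>+s. ennreal (exp (- v * s) * (1 - exp (- h n * s)) / h n) \<partial>\<nu>)"
      using integrable nonneg by (intro nn_integral_eq_integral [symmetric]) simp_all
    finally show ?thesis .
  qed
  moreover have "(\<lambda>n. \<integral>\<^sup>+s. ennreal (exp (- v * s) * (1 - exp (- h n * s)) / h n) \<partial>\<nu>)
      \<longlonglongrightarrow> (\<integral>\<^sup>+s. ennreal (s * exp (- v * s)) \<partial>\<nu>)"
    using nn_integral_exp_difference_quotient_tendsto[of "\<lambda>s. s" \<nu> h v] h by simp
  ultimately show ?thesis
    by (simp add: tendsto_add)
qed

lemma nn_integral_X_mult_exp:
  assumes v: "0 \<le> v"
  shows "(\<integral>\<^sup>+x. ennreal (X x * exp (- v * X x)) \<partial>M)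
    = ennreal (exp (\<Psi> (- v))) * (ennreal \<delta> + (\<integral>\<^sup>+s. ennreal (s * exp (- v * s)) \<partial>\<nu>))"
proof -
  define h :: "nat \<Rightarrow> real" where "h n = inverse (real (Suc n))" for n
  have h: "\<And>n. 0 < h n" "h \<longlonglongrightarrow> 0"
    using LIMSEQ_inverse_real_of_nat unfolding h_def by simp_all
  define D where "D n = \<Psi> (- v) - \<Psi> (- (v + h n))" for n
  have D_nonneg: "0 \<le> D n" for n
  proof -
    have "0 \<le> (\<integral>s. exp (- v * s) * (1 - exp (- h n * s)) \<partial>\<nu>)"
      using AE_levy_measure_pos h(1)[of n] by (intro integral_nonneg_AE) (auto elim!: eventually_mono)
    then show ?thesis
      using laplace_exponent_diff[OF v less_imp_le[OF h(1)]] drift_nonneg h(1)[of n] by (simp add: D_def)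
  qed
  have "D \<longlonglongrightarrow> \<Psi> (- v) - \<Psi> (- v)"
    unfolding D_def by (intro tendsto_diff tendsto_const laplace_exponent_tendsto v h)
  then have D_tendsto: "D \<longlonglongrightarrow> 0" by simp
  have transform: "(\<integral>x. exp (- t * X x) \<partial>M) = exp (\<Psi> (- t))" if "0 \<le> t" for t
    using laplace_transform that by blast
  have quotient: "ennreal (((\<integral>x. exp (- v * X x) \<partial>M) - (\<integral>x. exp (- (v + h n) * X x) \<partial>M)) / h n)
      = ennreal (exp (\<Psi> (- v))) * ennreal ((1 - exp (- D n)) / h n)" for n
  proof -
    have "exp (\<Psi> (- (v + h n))) = exp (\<Psi> (- v)) * exp (- D n)"
      by (simp add: D_def exp_diff exp_minus field_simps)
    moreover have "0 \<le> v + h n"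
      using v h(1)[of n] by simp
    ultimately show ?thesis
      unfolding transform[OF v] transform[OF \<open>0 \<le> v + h n\<close>]
      by (simp add: ennreal_mult' [symmetric] right_diff_distrib)
  qed
  have "(\<lambda>n. ennreal (exp (\<Psi> (- v))) * ennreal ((1 - exp (- D n)) / h n))
      \<longlonglongrightarrow> ennreal (exp (\<Psi> (- v))) * (ennreal \<delta> + (\<integral>\<^sup>+s. ennreal (s * exp (- v * s)) \<partial>\<nu>))"
    using laplace_exponent_difference_quotient_tendsto[OF v h, folded D_def]
    by (intro tendsto_mult_ennreal tendsto_const tendsto_ennreal_one_minus_exp_quotient[OF D_nonneg D_tendsto h(1)])
       simp_all
  moreover have "(\<lambda>n. ennreal (exp (\<Psi> (- v))) * ennreal ((1 - exp (- D n)) / h n))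
      \<longlonglongrightarrow> (\<integral>\<^sup>+x. ennreal (X x * exp (- v * X x)) \<partial>M)"
    using laplace_difference_quotient_tendsto[OF X_measurable X_nonneg v h] by (simp only: quotient)
  ultimately show ?thesis
    using LIMSEQ_unique by blast
qed

lemma nn_integral_X:
  "(\<integral>\<^sup>+x. ennreal (X x) \<partial>M) = ennreal \<delta> + (\<integral>\<^sup>+s. ennreal s \<partial>\<nu>)"
  using nn_integral_X_mult_exp[of 0] by (simp add: laplace_exponent_def)

lemma nn_integral_levy_measure_mult_exp_finite:
  assumes u: "0 < u"
  shows "(\<integral>\<^sup>+s. ennreal (s * exp (- u * s)) \<partial>\<nu>) < \<infinity>"
proof -
  have "(\<integral>\<^sup>+s. ennreal (s * exp (- u * s)) \<partial>\<nu>) \<le> (\<integral>\<^sup>+s. ennreal (max 1 (1 / u)) * ennreal (min 1 s) \<partial>\<nu>)"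
    using AE_levy_measure_pos
  proof (intro nn_integral_mono_AE, eventually_elim)
    case (elim s)
    have "s * exp (- u * s) \<le> s"
      using elim u by simp
    moreover have "u * s \<le> exp (u * s)"
      using exp_ge_add_one_self[of "u * s"] by linarith
    then have "s * exp (- u * s) \<le> 1 / u"
      using u by (simp add: exp_minus field_simps)
    ultimately have "s * exp (- u * s) \<le> max 1 (1 / u) * min 1 s"
    proof (cases "s \<le> 1")
      case True
      have "s \<le> max 1 (1 / u) * s"
        using elim mult_right_mono[of 1 "max 1 (1 / u)" s] by simp
      then show ?thesis
        using True order_trans[OF \<open>s * exp (- u * s) \<le> s\<close>] by (simp add: min_absorb2)
    qed simp
    then show ?case
      using elim by (simp add: ennreal_mult [symmetric] ennreal_leI)
  qed
  also have "\<dots> < \<infinity>"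
    using levy_measure_min_finite by (simp add: nn_integral_cmult ennreal_mult_less_top)
  finally show ?thesis .
qed

lemma nn_integral_X_one_minus_exp:
  assumes u: "0 < u"
  shows "(\<integral>\<^sup>+x. ennreal (X x * (1 - exp (- u * X x))) \<partial>M)
    = ennreal \<delta> * ennreal (1 - exp (\<Psi> (- u))) + (\<integral>\<^sup>+s. ennreal (s * (1 - exp (- u * s) * exp (\<Psi> (- u)))) \<partial>\<nu>)"
    (is "?E = ennreal \<delta> * ennreal (1 - ?L) + ?R")
proof -
  \<comment> \<open>Both sides plus the finite quantity \<open>?L * (\<delta> + K)\<close> equal the possibly infinite \<open>E[X]\<close>.\<close>
  define K where "K = (\<integral>\<^sup>+s. ennreal (s * exp (- u * s)) \<partial>\<nu>)"
  have L: "0 \<le> ?L" "?L \<le> 1"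
    using exp_laplace_exponent_le_one u by simp_all
  have "?E + ennreal ?L * (ennreal \<delta> + K) = (\<integral>\<^sup>+x. ennreal (X x) \<partial>M)"
    using nn_integral_split_exp[of X M u 1] X_nonneg nn_integral_X_mult_exp[of u] u
    by (simp add: AE_I2 K_def)
  also have "\<dots> = ennreal \<delta> + (\<integral>\<^sup>+s. ennreal s \<partial>\<nu>)"
    by (rule nn_integral_X)
  also have "\<dots> = ennreal \<delta> * ennreal (1 - ?L) + ennreal ?L * ennreal \<delta> + (?R + ennreal ?L * K)"
  proof -
    have "ennreal \<delta> = ennreal (\<delta> * (1 - ?L) + ?L * \<delta>)"
      by (simp add: algebra_simps)
    also have "\<dots> = ennreal \<delta> * ennreal (1 - ?L) + ennreal ?L * ennreal \<delta>"
      using L drift_nonneg by (simp add: ennreal_plus ennreal_mult)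
    finally show ?thesis
      using nn_integral_split_exp[of "\<lambda>s. s" \<nu> u ?L] AE_levy_measure_pos L u
      by (simp add: K_def eventually_mono less_imp_le)
  qed
  also have "\<dots> = (ennreal \<delta> * ennreal (1 - ?L) + ?R) + ennreal ?L * (ennreal \<delta> + K)"
    by (simp only: distrib_left add_ac)
  finally have "ennreal ?L * (ennreal \<delta> + K) + ?E = ennreal ?L * (ennreal \<delta> + K) + (ennreal \<delta> * ennreal (1 - ?L) + ?R)"
    by (simp only: add.commute)
  moreover have "ennreal ?L * (ennreal \<delta> + K) \<noteq> \<infinity>"
    using nn_integral_levy_measure_mult_exp_finite[OF u] by (simp add: K_def ennreal_mult_eq_top_iff)
  ultimately show ?thesis
    unfolding ennreal_add_left_cancel by blast
qed

lemma nn_integral_X_one_minus_exp_divide: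
  assumes "0 < u" "0 \<le> w"
  shows "(\<integral>\<^sup>+x. ennreal (X x * (1 - exp (- u * X x))) \<partial>M) * ennreal (1 / w)
    = ennreal \<delta> * ennreal ((1 - exp (\<Psi> (- u))) / w)
      + (\<integral>\<^sup>+s. ennreal s * ennreal ((1 - exp (- u * s) * exp (\<Psi> (- u))) / w) \<partial>\<nu>)"
proof -
  have "(\<integral>\<^sup>+s. ennreal (s * (1 - exp (- u * s) * exp (\<Psi> (- u)))) \<partial>\<nu>) * ennreal (1 / w)
      = (\<integral>\<^sup>+s. ennreal (s * (1 - exp (- u * s) * exp (\<Psi> (- u)))) * ennreal (1 / w) \<partial>\<nu>)"
    by (rule nn_integral_multc [symmetric]) simp
  also have "\<dots> = (\<integral>\<^sup>+s. ennreal s * ennreal ((1 - exp (- u * s) * exp (\<Psi> (- u))) / w) \<partial>\<nu>)"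
    using AE_levy_measure_pos assms(2)
    by (intro nn_integral_cong_AE) (auto elim!: eventually_mono simp: ennreal_mult' [symmetric] ennreal_mult'' [symmetric])
  finally show ?thesis
    using nn_integral_X_one_minus_exp[OF assms(1)] assms(2)
    by (simp add: distrib_right ennreal_mult'' [symmetric] mult.assoc)
qed

lemma set_nn_integral_X_one_minus_exp_divide_powr:
  "(\<integral>\<^sup>+u\<in>{0<..}. (\<integral>\<^sup>+x. ennreal (X x * (1 - exp (- u * X x))) \<partial>M) * ennreal (1 / u powr p) \<partial>lborel)
    = ennreal \<delta> * (\<integral>\<^sup>+u\<in>{0<..}. ennreal ((1 - exp (\<Psi> (- u))) / u powr p) \<partial>lborel)
      + (\<integral>\<^sup>+u\<in>{0<..}. (\<integral>\<^sup>+s. ennreal s * ennreal ((1 - exp (- u * s) * exp (\<Psi> (- u))) / u powr p) \<partial>\<nu>) \<partial>lborel)"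
proof -
  have "(\<integral>\<^sup>+x. ennreal (X x * (1 - exp (- u * X x))) \<partial>M) * ennreal (1 / u powr p) * indicator {0<..} u
      = ennreal \<delta> * (ennreal ((1 - exp (\<Psi> (- u))) / u powr p) * indicator {0<..} u)
        + (\<integral>\<^sup>+s. ennreal s * ennreal ((1 - exp (- u * s) * exp (\<Psi> (- u))) / u powr p) \<partial>\<nu>) * indicator {0<..} u"
    for u
    using nn_integral_X_one_minus_exp_divide[of u "u powr p"] by (cases "0 < u") simp_all
  then show ?thesis
    by (simp add: nn_integral_add nn_integral_cmult)
qed

end

theorem proposition2p4:
  fixes M :: "'a measure" and X :: "'a \<Rightarrow> real"
    and lam \<delta> :: real and \<nu> :: "real measure"
  assumes lam_bounds: "0 < lam" "lam < 1"
    and prob: "prob_space M"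
    and rv: "X \<in> borel_measurable M"
    and nonneg: "\<forall>x\<in>space M. 0 \<le> X x"
    and drift: "0 \<le> \<delta>"
    and nu_sets: "sets \<nu> = sets borel"
    and nu_supp: "emeasure \<nu> {..0} = 0"
    and nu_int: "(\<integral>\<^sup>+ s. ennreal (min 1 s) \<partial>\<nu>) < \<infinity>"
    and laplace: "\<forall>t\<ge>0. (\<integral>x. exp (- t * X x) \<partial>M) = exp (laplace_exponent \<delta> \<nu> (- t))"
  shows "(\<integral>\<^sup>+ x. ennreal (X x powr (1 + lam)) \<partial>M) =
    ennreal (lam / Gamma (1 - lam)) *
      (ennreal \<delta> * (\<integral>\<^sup>+ u\<in>{0<..}. ennreal ((1 - exp (laplace_exponent \<delta> \<nu> (- u))) / u powr (1 + lam)) \<partial>lborel)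
       + (\<integral>\<^sup>+ s. ennreal s *
            (\<integral>\<^sup>+ u\<in>{0<..}. ennreal ((1 - exp (- u * s) * exp (laplace_exponent \<delta> \<nu> (- u))) / u powr (1 + lam)) \<partial>lborel) \<partial>\<nu>))"
proof -
  interpret nonneg_infinitely_divisible M X \<delta> \<nu>
    using prob rv nonneg drift nu_sets nu_supp nu_int laplace
    by (intro nonneg_infinitely_divisible.intro nonneg_infinitely_divisible_axioms.intro)
  have "(\<integral>\<^sup>+ x. ennreal (X x powr (1 + lam)) \<partial>M) = ennreal (lam / Gamma (1 - lam)) *
      (\<integral>\<^sup>+u\<in>{0<..}. (\<integral>\<^sup>+x. ennreal (X x * (1 - exp (- u * X x))) \<partial>M) * ennreal (1 / u powr (1 + lam)) \<partial>lborel)"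
    by (rule nn_integral_powr_one_plus_eq[OF rv nonneg lam_bounds])
  also have "(\<integral>\<^sup>+u\<in>{0<..}. (\<integral>\<^sup>+x. ennreal (X x * (1 - exp (- u * X x))) \<partial>M) * ennreal (1 / u powr (1 + lam)) \<partial>lborel)
    = ennreal \<delta> * (\<integral>\<^sup>+u\<in>{0<..}. ennreal ((1 - exp (\<Psi> (- u))) / u powr (1 + lam)) \<partial>lborel)
      + (\<integral>\<^sup>+u\<in>{0<..}. (\<integral>\<^sup>+s. ennreal s * ennreal ((1 - exp (- u * s) * exp (\<Psi> (- u))) / u powr (1 + lam)) \<partial>\<nu>) \<partial>lborel)"
    by (rule set_nn_integral_X_one_minus_exp_divide_powr)
  also have "(\<integral>\<^sup>+u\<in>{0<..}. (\<integral>\<^sup>+s. ennreal s * ennreal ((1 - exp (- u * s) * exp (\<Psi> (- u))) / u powr (1 + lam)) \<partial>\<nu>) \<partial>lborel)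
      = (\<integral>\<^sup>+s. ennreal s * (\<integral>\<^sup>+u\<in>{0<..}. ennreal ((1 - exp (- u * s) * exp (\<Psi> (- u))) / u powr (1 + lam)) \<partial>lborel) \<partial>\<nu>)"
    by (rule levy.nn_integral_set_lborel_mult_swap) measurable
  finally show ?thesis .
qed

end
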